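(* Let $X'\in\lambda\mathrm{Der}(\mathcal{B})[[\lambda]]$ be such that $\exp(X')\phi_0'(\mathcal{A}'[[\lambda]])\subseteq C$. Then (i) the map $\exp(X')\phi_0':\mathcal{A}'[[\lambda]]\to C$ is a ring isomorphism; (ii) there is a unique Poisson structure $\pi'$ on $\mathcal{A}'[[\lambda]]$ such that $\Phi'=\exp(X')\phi_0':(\mathcal{A}'[[\lambda]],\pi')\to(\mathcal{B}[[\lambda]],\sigma)$ is a Poisson morphism.
   Context: $\mathbb{K}$ is a field of characteristic zero. $\mathcal{A},\mathcal{B}$ are commutative $\mathbb{K}$-algebras with Poisson brackets $\pi_0=\{\cdot,\cdot\}_{\mathcal{A}}$, $\sigma_0=\{\cdot,\cdot\}_{\mathcal{B}}$, and $\phi_0:\mathcal{A}\to\mathcal{B}$ is a Poisson morphism. $\pi$ and $\sigma$ are formal Poisson deformations of $\pi_0,\sigma_0$ (i.e. $\mathbb{K}[[\lambda]]$-bilinear Poisson brackets on $\mathcal{A}[[\lambda]]$, $\mathcal{B}[[\lambda]]$ with zeroth-order terms $\pi_0,\sigma_0$), and $\Phi:(\mathcal{A}[[\lambda]],\pi)\to(\mathcal{B}[[\lambda]],\sigma)$ is a $\mathbb{K}[[\lambda]]$-linear Poisson morphism (of commutative algebras and brackets) with zeroth-order term $\phi_0$. $\mathcal{A}'=\{b\in\mathcal{B}:\{b,\phi_0(a)\}_{\mathcal{B}}=0\ \forall a\in\mathcal{A}\}$ is the Poisson commutant, with its induced bracket $\pi_0'$, and $\phi_0':\mathcal{A}'\to\mathcal{B}$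 is the inclusion (extended $\lambda$-linearly). $C=\{b\in\mathcal{B}[[\lambda]]:\sigma(b,\Phi(a))=0\ \forall a\in\mathcal{A}[[\lambda]]\}$. For $X'\in\lambda\mathrm{Der}(\mathcal{B})[[\lambda]]$, $\exp(X')=\sum_n(X')^n/n!$. *)

theory Defs
  imports "HOL-Computational_Algebra.Formal_Power_Series"
begin

text \<open>A commutative K-algebra is a commutative ring together with
its structure map e from K (a unital ring homomorphism).\<close>

definition kalg_map :: "('k::field \<Rightarrow> 'r::comm_ring_1) \<Rightarrow> bool" where
  "kalg_map e \<longleftrightarrow> e 0 = 0 \<and> e 1 = 1 \<and> (\<forall>x y. e (x + y) = e x + e y) \<and>
                   (\<forall>x y. e (x * y) = e x * e y)"

definition fps_map :: "('a::zero \<Rightarrow> 'b::zero) \<Rightarrow> 'a fps \<Rightarrow> 'b fps" where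
  "fps_map h f = Abs_fps (\<lambda>n. h (fps_nth f n))"

definition poisson_on ::
  "'r::comm_ring_1 set \<Rightarrow> ('c \<Rightarrow> 'r) \<Rightarrow> ('r \<Rightarrow> 'r \<Rightarrow> 'r) \<Rightarrow> bool" where
  "poisson_on S scal br \<longleftrightarrow>
     (\<forall>x\<in>S. \<forall>y\<in>S. br x y \<in> S) \<and>
     (\<forall>x\<in>S. \<forall>y\<in>S. \<forall>z\<in>S. br (x + y) z = br x z + br y z) \<and>
     (\<forall>c. \<forall>x\<in>S. \<forall>y\<in>S. br (scal c * x) y = scal c * br x y) \<and>
     (\<forall>x\<in>S. \<forall>y\<in>S. br x y = - br y x) \<and>
     (\<forall>x\<in>S. \<forall>y\<in>S. \<forall>z\<in>S. br x (br y z) + br y (br z x) + br z (br x y) = 0) \<and>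
     (\<forall>x\<in>S. \<forall>y\<in>S. \<forall>z\<in>S. br x (y * z) = br x y * z + y * br x z)"

abbreviation poisson :: "('k::field \<Rightarrow> 'r::comm_ring_1) \<Rightarrow> ('r \<Rightarrow> 'r \<Rightarrow> 'r) \<Rightarrow> bool" where
  "poisson e br \<equiv> poisson_on UNIV e br"

abbreviation fpoisson :: "('k::field \<Rightarrow> 'r::comm_ring_1) \<Rightarrow> ('r fps \<Rightarrow> 'r fps \<Rightarrow> 'r fps) \<Rightarrow> bool" where
  "fpoisson e br \<equiv> poisson_on UNIV (fps_map e) br"

definition alg_hom :: "('c \<Rightarrow> 'r::comm_ring_1) \<Rightarrow> ('c \<Rightarrow> 's::comm_ring_1) \<Rightarrow> ('r \<Rightarrow> 's) \<Rightarrow> bool" where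
  "alg_hom eR eS h \<longleftrightarrow> h 1 = 1 \<and> (\<forall>x y. h (x + y) = h x + h y) \<and>
     (\<forall>x y. h (x * y) = h x * h y) \<and> (\<forall>c x. h (eR c * x) = eS c * h x)"

definition poisson_hom ::
  "('c \<Rightarrow> 'r::comm_ring_1) \<Rightarrow> ('c \<Rightarrow> 's::comm_ring_1) \<Rightarrow> ('r \<Rightarrow> 'r \<Rightarrow> 'r) \<Rightarrow> ('s \<Rightarrow> 's \<Rightarrow> 's)
    \<Rightarrow> ('r \<Rightarrow> 's) \<Rightarrow> bool" where
  "poisson_hom eR eS brR brS h \<longleftrightarrow> alg_hom eR eS h \<and> (\<forall>x y. h (brR x y) = brS (h x) (h y))"

definition is_derivation :: "('k \<Rightarrow> 'r::comm_ring_1) \<Rightarrow> ('r \<Rightarrow> 'r) \<Rightarrow> bool" where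
  "is_derivation e D \<longleftrightarrow> (\<forall>x y. D (x + y) = D x + D y) \<and> (\<forall>c x. D (e c * x) = e c * D x) \<and>
     (\<forall>x y. D (x * y) = D x * y + x * D y)"

text \<open>An element X' = \<Sum>n\<ge>1 \<lambda>^n D_n of \<lambda>Der(B)[[\<lambda>]] is given by the sequence D
of its coefficients, with D 0 = 0 and each D n a derivation.\<close>
definition lambda_der :: "('k \<Rightarrow> 'r::comm_ring_1) \<Rightarrow> (nat \<Rightarrow> 'r \<Rightarrow> 'r) \<Rightarrow> bool" where
  "lambda_der e D \<longleftrightarrow> D 0 = (\<lambda>x. 0) \<and> (\<forall>n. is_derivation e (D n))"

definition der_apply :: "(nat \<Rightarrow> 'r::comm_ring_1 \<Rightarrow> 'r) \<Rightarrow> 'r fps \<Rightarrow> 'r fps" where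
  "der_apply D f = Abs_fps (\<lambda>n. \<Sum>i\<le>n. D i (fps_nth f (n - i)))"

text \<open>exp(X') = \<Sum>k (X')^k / k!; since (X')^k raises the \<lambda>-order by k, the
coefficient of \<lambda>^n only involves k \<le> n.\<close>
definition der_exp :: "('k::field_char_0 \<Rightarrow> 'r::comm_ring_1) \<Rightarrow> (nat \<Rightarrow> 'r \<Rightarrow> 'r) \<Rightarrow> 'r fps \<Rightarrow> 'r fps" where
  "der_exp e D f = Abs_fps (\<lambda>n. \<Sum>k\<le>n. e (inverse (fact k)) * fps_nth ((der_apply D ^^ k) f) n)"

definition poisson_commutant :: "('b \<Rightarrow> 'b \<Rightarrow> 'b::zero) \<Rightarrow> ('a \<Rightarrow> 'b) \<Rightarrow> 'b set" where
  "poisson_commutant brB phi = {b. \<forall>a. brB b (phi a) = 0}"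

definition fps_over :: "'b::zero set \<Rightarrow> 'b fps set" where
  "fps_over S = {f. \<forall>n. fps_nth f n \<in> S}"

end

theory Submission
  imports Defs
begin

unbundle fps_syntax

text \<open>The operator \<open>X'\<close> raises the \<lambda>-adic order and, coefficientwise, is a
derivation; by the Leibniz rule \<open>exp(X')\<close> is then an algebra endomorphism of
\<open>B[[\<lambda>]]\<close> that is the identity modulo higher order terms, hence injective.
An element of \<open>C\<close> whose coefficients vanish below order \<open>n\<close> is \<open>\<lambda>\<^sup>n\<close> times an
element of \<open>C\<close>, and constant terms of elements of \<open>C\<close> lie in \<open>A'\<close> because \<open>\<sigma>\<close> and
\<open>\<Phi>\<close> reduce to \<open>\<sigma>\<^sub>0\<close> and \<open>\<phi>\<^sub>0\<close> modulo \<open>\<lambda>\<close>.  So a preimage in \<open>A'[[\<lambda>]]\<close> of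
any element of \<open>C\<close> can be found order by order.  Finally \<open>C\<close> is closed under \<open>\<sigma>\<close>
by the Jacobi identity, so \<open>\<sigma>\<close> pulls back along the isomorphism to a unique
Poisson bracket on \<open>A'[[\<lambda>]]\<close>.\<close>

section \<open>Poisson brackets and Poisson commutants\<close>

lemma poisson_add_left: "poisson_on UNIV s br \<Longrightarrow> br (x + y) z = br x z + br y z"
  unfolding poisson_on_def by blast

lemma poisson_scal_left: "poisson_on UNIV s br \<Longrightarrow> br (s c * x) y = s c * br x y"
  unfolding poisson_on_def by blast

lemma poisson_skew: "poisson_on UNIV s br \<Longrightarrow> br x y = - br y x"
  unfolding poisson_on_def by blast

lemma poisson_jacobi:
  "poisson_on UNIV s br \<Longrightarrow> br x (br y z) + br y (br z x) + br z (br x y) = 0"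
  unfolding poisson_on_def by blast

lemma poisson_leibniz: "poisson_on UNIV s br \<Longrightarrow> br x (y * z) = br x y * z + y * br x z"
  unfolding poisson_on_def by blast

lemma poisson_zero_left: "poisson_on UNIV s br \<Longrightarrow> br 0 z = 0"
  using poisson_add_left[of s br 0 0 z] by simp

lemma poisson_zero_right: "poisson_on UNIV s br \<Longrightarrow> br z 0 = 0"
  using poisson_zero_left[of s br z] poisson_skew[of s br z 0] by simp

lemma poisson_diff_left: "poisson_on UNIV s br \<Longrightarrow> br (x - y) z = br x z - br y z"
  using poisson_add_left[of s br "x - y" y z] by (simp add: algebra_simps)

lemma poisson_mult_left: "poisson_on UNIV s br \<Longrightarrow> br (y * z) x = br y x * z + y * br z x"
  using poisson_leibniz[of s br x y z] poisson_skew[of s br x "y * z"]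
    poisson_skew[of s br x y] poisson_skew[of s br x z]
  by (simp add: algebra_simps)

lemma poisson_commutant_zero: "poisson_on UNIV s br \<Longrightarrow> 0 \<in> poisson_commutant br h"
  using poisson_zero_left by (fastforce simp: poisson_commutant_def)

lemma poisson_commutant_add:
  "\<lbrakk>poisson_on UNIV s br; x \<in> poisson_commutant br h; y \<in> poisson_commutant br h\<rbrakk>
    \<Longrightarrow> x + y \<in> poisson_commutant br h"
  using poisson_add_left[of s br x y] by (simp add: poisson_commutant_def)

lemma poisson_commutant_diff:
  "\<lbrakk>poisson_on UNIV s br; x \<in> poisson_commutant br h; y \<in> poisson_commutant br h\<rbrakk>
    \<Longrightarrow> x - y \<in> poisson_commutant br h"
  using poisson_diff_left[of s br x y] by (simp add: poisson_commutant_def)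

lemma poisson_commutant_mult:
  "\<lbrakk>poisson_on UNIV s br; x \<in> poisson_commutant br h; y \<in> poisson_commutant br h\<rbrakk>
    \<Longrightarrow> x * y \<in> poisson_commutant br h"
  using poisson_mult_left[of s br x y] by (simp add: poisson_commutant_def)

lemma poisson_commutant_scal:
  "\<lbrakk>poisson_on UNIV s br; x \<in> poisson_commutant br h\<rbrakk> \<Longrightarrow> s c * x \<in> poisson_commutant br h"
  using poisson_scal_left[of s br c x] by (simp add: poisson_commutant_def)

lemma poisson_commutant_bracket:
  assumes p: "poisson_on UNIV s br"
    and x: "x \<in> poisson_commutant br h" and y: "y \<in> poisson_commutant br h"
  shows "br x y \<in> poisson_commutant br h"
  unfolding poisson_commutant_def
proof (intro CollectI allI)
  fix a
  have "br (h a) x = 0" "br y (h a) = 0"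
    using x y poisson_skew[OF p, of "h a" x] by (auto simp: poisson_commutant_def)
  then have "br (h a) (br x y) = 0"
    using poisson_jacobi[OF p, of x y "h a"] poisson_zero_right[OF p] by simp
  then show "br (br x y) (h a) = 0"
    using poisson_skew[OF p, of "br x y" "h a"] by simp
qed

lemma alg_hom_poisson_pullback:
  fixes E :: "'r::comm_ring_1 \<Rightarrow> 's::comm_ring_1"
  assumes br: "poisson_on UNIV s br" and hom: "alg_hom t s E" and inj: "inj E"
    and add: "\<And>x y. x \<in> S \<Longrightarrow> y \<in> S \<Longrightarrow> x + y \<in> S"
    and mult: "\<And>x y. x \<in> S \<Longrightarrow> y \<in> S \<Longrightarrow> x * y \<in> S"
    and scal: "\<And>c x. x \<in> S \<Longrightarrow> t c * x \<in> S"
    and image: "\<And>x y. x \<in> S \<Longrightarrow> y \<in> S \<Longrightarrow> br (E x) (E y) \<in> E ` S"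
  shows "\<exists>pi'. poisson_on S t pi' \<and> (\<forall>f\<in>S. \<forall>g\<in>S. E (pi' f g) = br (E f) (E g))
    \<and> (\<forall>pi''. (poisson_on S t pi'' \<and> (\<forall>f\<in>S. \<forall>g\<in>S. E (pi'' f g) = br (E f) (E g)))
          \<longrightarrow> (\<forall>f\<in>S. \<forall>g\<in>S. pi'' f g = pi' f g))"
proof -
  have E_add: "E (x + y) = E x + E y" and E_mult: "E (x * y) = E x * E y"
    and E_scal: "E (t c * x) = s c * E x" for x y c
    using hom unfolding alg_hom_def by blast+
  have E_0: "E 0 = 0"
    using E_add[of 0 0] by simp
  have E_minus: "E (- x) = - E x" for x
    using E_add[of x "- x"] by (simp add: E_0 add_eq_0_iff2)
  define pi' where "pi' f g = inv_into S E (br (E f) (E g))" for f g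
  have pi'_S: "pi' f g \<in> S" and E_pi': "E (pi' f g) = br (E f) (E g)"
    if "f \<in> S" "g \<in> S" for f g
    using image[OF that] by (auto simp: pi'_def inv_into_into f_inv_into_f)
  have "poisson_on S t pi'"
    unfolding poisson_on_def
  proof (intro conjI ballI allI)
    fix x y z assume "x \<in> S" "y \<in> S" "z \<in> S"
    then show "pi' (x + y) z = pi' x z + pi' y z"
      and "pi' x (pi' y z) + pi' y (pi' z x) + pi' z (pi' x y) = 0"
      and "pi' x (y * z) = pi' x y * z + y * pi' x z"
      by (auto intro!: injD[OF inj] simp: add mult pi'_S E_pi' E_add E_mult E_0
          poisson_add_left[OF br] poisson_jacobi[OF br] poisson_leibniz[OF br])
  next
    fix c x y assume "x \<in> S" "y \<in> S"
    then show "pi' (t c * x) y = t c * pi' x y"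
      by (auto intro!: injD[OF inj] simp: scal E_pi' E_scal poisson_scal_left[OF br])
  next
    fix x y assume "x \<in> S" "y \<in> S"
    then show "pi' x y \<in> S" by (rule pi'_S)
    show "pi' x y = - pi' y x"
      using \<open>x \<in> S\<close> \<open>y \<in> S\<close>
      by (auto intro!: injD[OF inj] simp: E_pi' E_minus poisson_skew[OF br, of "E x"])
  qed
  moreover have "\<forall>f\<in>S. \<forall>g\<in>S. pi'' f g = pi' f g"
    if "\<forall>f\<in>S. \<forall>g\<in>S. E (pi'' f g) = br (E f) (E g)" for pi''
    using that E_pi' by (auto intro: injD[OF inj])
  ultimately show ?thesis
    using E_pi' by blast
qed

section \<open>Formal power series and formal Poisson brackets\<close>

lemma sum_in_closed_set:
  assumes "0 \<in> S" and "\<And>x y. x \<in> S \<Longrightarrow> y \<in> S \<Longrightarrow> x + y \<in> S"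
    and "\<And>i. i \<in> I \<Longrightarrow> F i \<in> S"
  shows "sum F I \<in> S"
  using assms(3) by (induction I rule: infinite_finite_induct) (auto intro: assms(1,2))

lemma fps_over_add:
  assumes "\<And>x y. x \<in> S \<Longrightarrow> y \<in> S \<Longrightarrow> x + y \<in> S"
  shows "f \<in> fps_over S \<Longrightarrow> g \<in> fps_over S \<Longrightarrow> f + g \<in> fps_over S"
  using assms by (simp add: fps_over_def)

lemma fps_over_mult:
  assumes "0 \<in> S" and "\<And>x y. x \<in> S \<Longrightarrow> y \<in> S \<Longrightarrow> x + y \<in> S"
    and "\<And>x y. x \<in> S \<Longrightarrow> y \<in> S \<Longrightarrow> x * y \<in> S"
  shows "f \<in> fps_over S \<Longrightarrow> g \<in> fps_over S \<Longrightarrow> f * g \<in> fps_over S"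
  by (auto simp: fps_over_def fps_mult_nth intro!: sum_in_closed_set assms)

lemma fps_over_scal:
  assumes "0 \<in> S" and "\<And>x y. x \<in> S \<Longrightarrow> y \<in> S \<Longrightarrow> x + y \<in> S"
    and "\<And>c x. x \<in> S \<Longrightarrow> e c * x \<in> S"
  shows "f \<in> fps_over S \<Longrightarrow> fps_map e a * f \<in> fps_over S"
  by (auto simp: fps_over_def fps_mult_nth fps_map_def intro!: sum_in_closed_set assms)

lemma fps_over_poisson_commutant:
  assumes br: "poisson_on UNIV s br"
    and f: "f \<in> fps_over (poisson_commutant br h)" and g: "g \<in> fps_over (poisson_commutant br h)"
  shows "f + g \<in> fps_over (poisson_commutant br h)"
    and "f * g \<in> fps_over (poisson_commutant br h)"
    and "fps_map s c * f \<in> fps_over (poisson_commutant br h)"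
proof -
  note closed = poisson_commutant_zero[OF br] poisson_commutant_add[OF br]
    poisson_commutant_mult[OF br] poisson_commutant_scal[OF br]
  show "f + g \<in> fps_over (poisson_commutant br h)"
    by (rule fps_over_add[OF closed(2) f g])
  show "f * g \<in> fps_over (poisson_commutant br h)"
    by (rule fps_over_mult[OF closed(1,2,3) f g])
  show "fps_map s c * f \<in> fps_over (poisson_commutant br h)"
    by (rule fps_over_scal[OF closed(1,2,4) f])
qed

lemma fps_mult_nth_cong:
  assumes "\<And>m. m \<le> n \<Longrightarrow> f $ m = f' $ m" and "\<And>m. m \<le> n \<Longrightarrow> g $ m = g' $ m"
  shows "(f * g) $ n = (f' * g') $ n"
  unfolding fps_mult_nth by (intro sum.cong) (auto simp: assms)

lemma fps_mult_nth_eq_0_below: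
  fixes f g :: "'a::{comm_monoid_add, mult_zero} fps"
  assumes "\<forall>m<a. f $ m = 0" and "\<forall>m<b. g $ m = 0" and "n < a + b"
  shows "(f * g) $ n = 0"
  unfolding fps_mult_nth
proof (intro sum.neutral ballI)
  fix i assume "i \<in> {0..n}"
  then have "i < a \<or> n - i < b"
    using assms(3) by auto
  then show "f $ i * g $ (n - i) = 0"
    using assms(1,2) by auto
qed

lemma fps_map_X_power: "kalg_map e \<Longrightarrow> fps_map e (fps_X ^ n) = fps_X ^ n"
  by (rule fps_ext) (simp add: fps_map_def fps_X_power_nth kalg_map_def)

lemma fpoisson_X_power_left:
  assumes "kalg_map e" "fpoisson e br"
  shows "br (fps_X ^ n * f) g = fps_X ^ n * br f g"
  using poisson_scal_left[OF assms(2), of "fps_X ^ n" f g] by (simp add: fps_map_X_power assms(1))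

lemma fpoisson_nth_0_left:
  assumes "kalg_map e" and br: "fpoisson e br"
  shows "br f g $ 0 = br (fps_const (f $ 0)) g $ 0"
proof -
  define a t where "a = f $ 0" and "t = Abs_fps (\<lambda>n. f $ (n + 1))"
  have "f = fps_const a + fps_X ^ 1 * t"
    by (rule fps_ext) (simp add: a_def t_def fps_X_power_mult_nth)
  then have "br f g = br (fps_const a) g + br (fps_X ^ 1 * t) g"
    by (simp only: poisson_add_left[OF br])
  also have "\<dots> = br (fps_const a) g + fps_X ^ 1 * br t g"
    by (simp only: fpoisson_X_power_left[OF assms])
  finally show ?thesis by (simp add: a_def fps_X_power_mult_nth)
qed

lemma fpoisson_nth_0:
  assumes "kalg_map e" and br: "fpoisson e br"
  shows "br f g $ 0 = br (fps_const (f $ 0)) (fps_const (g $ 0)) $ 0"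
proof -
  have "br f g $ 0 = br (fps_const (f $ 0)) g $ 0"
    by (rule fpoisson_nth_0_left[OF assms])
  also have "\<dots> = - (br g (fps_const (f $ 0)) $ 0)"
    using poisson_skew[OF br, of "fps_const (f $ 0)" g] by simp
  also have "br g (fps_const (f $ 0)) $ 0 = br (fps_const (g $ 0)) (fps_const (f $ 0)) $ 0"
    by (rule fpoisson_nth_0_left[OF assms])
  also have "- \<dots> = br (fps_const (f $ 0)) (fps_const (g $ 0)) $ 0"
    using poisson_skew[OF br, of "fps_const (f $ 0)" "fps_const (g $ 0)"] by simp
  finally show ?thesis .
qed

lemma poisson_commutant_lowest_coeff:
  assumes e: "kalg_map e" and br: "fpoisson e br"
    and br_0: "\<And>x y. br (fps_const x) (fps_const y) $ 0 = br\<^sub>0 x y"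
    and h_0: "\<And>x. h (fps_const x) $ 0 = h\<^sub>0 x"
    and f: "f \<in> poisson_commutant br h" and below: "\<forall>m<n. f $ m = 0"
  shows "f $ n \<in> poisson_commutant br\<^sub>0 h\<^sub>0"
proof -
  define g where "g = Abs_fps (\<lambda>m. f $ (m + n))"
  have f_eq: "f = fps_X ^ n * g"
    by (rule fps_ext) (simp add: g_def fps_X_power_mult_nth below)
  have g_comm: "br g (h a) = 0" for a
  proof (rule fps_ext)
    fix m
    have "fps_X ^ n * br g (h a) = 0"
      using f by (simp add: f_eq poisson_commutant_def fpoisson_X_power_left[OF e br])
    then have "(fps_X ^ n * br g (h a)) $ (m + n) = 0" by simp
    then show "br g (h a) $ m = 0 $ m" by (simp add: fps_X_power_mult_nth)
  qed
  have "br\<^sub>0 (f $ n) (h\<^sub>0 a) = 0" for a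
  proof -
    have "br\<^sub>0 (f $ n) (h\<^sub>0 a) = br (fps_const (g $ 0)) (fps_const (h (fps_const a) $ 0)) $ 0"
      by (simp add: g_def br_0 h_0)
    also have "\<dots> = br g (h (fps_const a)) $ 0"
      by (rule fpoisson_nth_0[OF e br, symmetric])
    finally show ?thesis by (simp add: g_comm)
  qed
  then show ?thesis by (simp add: poisson_commutant_def)
qed

section \<open>Exponentials of \<lambda>-derivations\<close>

lemma binomial_sum_Suc:
  fixes A B :: "nat \<Rightarrow> 'a::comm_ring_1"
  shows "(\<Sum>k\<le>n. of_nat (n choose k) * A (k + 1) * B (n - k)) +
      (\<Sum>k\<le>n. of_nat (n choose k) * A k * B (n - k + 1))
    = (\<Sum>k\<le>n + 1. of_nat (n + 1 choose k) * A k * B (n + 1 - k))"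
proof -
  have decomp: "{0..n + 1} = {0} \<union> {n + 1} \<union> {1..n}"
    by auto
  have "(\<Sum>k\<le>n. of_nat (n choose k) * A (k + 1) * B (n - k)) +
      (\<Sum>k\<le>n. of_nat (n choose k) * A k * B (n - k + 1))
    = (\<Sum>k\<le>n. of_nat (n choose k) * A k * B (n + 1 - k)) +
      (\<Sum>k=1..n + 1. of_nat (n choose (k - 1)) * A k * B (n + 1 - k))"
    by (simp add: atMost_atLeast0 sum.shift_bounds_cl_Suc_ivl Suc_diff_le field_simps
        del: sum.cl_ivl_Suc)
  also have "\<dots> = B (n + 1) * A 0 +
      (\<Sum>k=1..n. of_nat (n choose k) * A k * B (n + 1 - k)) + (A (n + 1) * B 0 +
      (\<Sum>k=1..n. of_nat (n choose (k - 1)) * A k * B (n + 1 - k)))"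
    using sum.nat_ivl_Suc' [of 1 n "\<lambda>k. of_nat (n choose (k - 1)) * A k * B (n + 1 - k)"]
    by (simp add: sum.atLeast_Suc_atMost atMost_atLeast0)
  also have "\<dots> = A (n + 1) * B 0 + B (n + 1) * A 0 +
      (\<Sum>k=1..n. of_nat (n + 1 choose k) * A k * B (n + 1 - k))"
    by (auto simp add: field_simps sum.distrib [symmetric] choose_reduce_nat)
  also have "\<dots> = (\<Sum>k\<le>n + 1. of_nat (n + 1 choose k) * A k * B (n + 1 - k))"
    using decomp by (simp add: atMost_atLeast0 field_simps)
  finally show ?thesis .
qed

lemma derivation_power_mult:
  fixes d :: "'a::comm_ring_1 \<Rightarrow> 'a"
  assumes add: "\<And>x y. d (x + y) = d x + d y" and mult: "\<And>x y. d (x * y) = d x * y + x * d y"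
  shows "(d ^^ k) (x * y) = (\<Sum>j\<le>k. of_nat (k choose j) * (d ^^ j) x * (d ^^ (k - j)) y)"
proof -
  have d_0: "d 0 = 0"
    using add[of 0 0] by simp
  have d_sum: "d (sum F I) = (\<Sum>i\<in>I. d (F i))" for F and I :: "nat set"
    by (induction I rule: infinite_finite_induct) (simp_all add: d_0 add)
  have d_of_nat: "d (of_nat m * z) = of_nat m * d z" for m z
    by (induction m) (simp_all add: d_0 add algebra_simps)
  show ?thesis
  proof (induction k)
    case 0
    then show ?case by simp
  next
    case (Suc k)
    let ?A = "\<lambda>j. (d ^^ j) x" and ?B = "\<lambda>j. (d ^^ j) y"
    have "(d ^^ Suc k) (x * y) = d (\<Sum>j\<le>k. of_nat (k choose j) * (?A j * ?B (k - j)))"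
      using Suc by (simp add: mult.assoc)
    also have "\<dots> = (\<Sum>j\<le>k. of_nat (k choose j) * (?A (j + 1) * ?B (k - j) + ?A j * ?B (k - j + 1)))"
      by (simp only: d_sum d_of_nat) (simp add: mult)
    also have "\<dots> = (\<Sum>j\<le>k. of_nat (k choose j) * ?A (j + 1) * ?B (k - j)) +
        (\<Sum>j\<le>k. of_nat (k choose j) * ?A j * ?B (k - j + 1))"
      by (simp add: sum.distrib algebra_simps)
    also have "\<dots> = (\<Sum>j\<le>k + 1. of_nat (k + 1 choose j) * ?A j * ?B (k + 1 - j))"
      by (rule binomial_sum_Suc)
    finally show ?case by simp
  qed
qed

lemma sum_square_eq_triangle:
  fixes F :: "nat \<Rightarrow> nat \<Rightarrow> 'a::comm_monoid_add"
  assumes "\<And>j l. n < j + l \<Longrightarrow> F j l = 0"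
  shows "(\<Sum>j\<le>n. \<Sum>l\<le>n. F j l) = (\<Sum>k\<le>n. \<Sum>j\<le>k. F j (k - j))"
proof -
  have "(\<Sum>j\<le>n. \<Sum>l\<le>n. F j l) = (\<Sum>(j, l)\<in>{..n} \<times> {..n}. F j l)"
    by (rule sum.cartesian_product)
  also have "\<dots> = (\<Sum>(j, l)\<in>{(j, l). j + l \<le> n}. F j l)"
    using assms by (intro sum.mono_neutral_right) (auto, meson not_le)
  also have "\<dots> = (\<Sum>k\<le>n. \<Sum>j\<le>k. F j (k - j))"
    by (rule sum.triangle_reindex_eq)
  finally show ?thesis .
qed

lemma kalg_map_of_nat: "kalg_map e \<Longrightarrow> e (of_nat n) = of_nat n"
  by (induction n) (auto simp: kalg_map_def)

lemma kalg_map_one: "kalg_map e \<Longrightarrow> e 1 = 1"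
  by (simp add: kalg_map_def)

lemma kalg_map_mult: "kalg_map e \<Longrightarrow> e (x * y) = e x * e y"
  by (simp add: kalg_map_def)

locale lambda_derivation =
  fixes e :: "'k::field_char_0 \<Rightarrow> 'b::comm_ring_1" and D :: "nat \<Rightarrow> 'b \<Rightarrow> 'b"
  assumes kalg: "kalg_map e" and lambda_der: "lambda_der e D"
begin

abbreviation d :: "'b fps \<Rightarrow> 'b fps" where "d \<equiv> der_apply D"
abbreviation E :: "'b fps \<Rightarrow> 'b fps" where "E \<equiv> der_exp e D"
abbreviation exp_coeff :: "nat \<Rightarrow> 'b" where "exp_coeff k \<equiv> e (inverse (fact k))"

lemma D_add: "D i (x + y) = D i x + D i y"
  using lambda_der unfolding lambda_der_def is_derivation_def by blast

lemma D_mult: "D i (x * y) = D i x * y + x * D i y"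
  using lambda_der unfolding lambda_der_def is_derivation_def by blast

lemma D_scal: "D i (e c * x) = e c * D i x"
  using lambda_der unfolding lambda_der_def is_derivation_def by blast

lemma D_at_0: "D 0 x = 0"
  using lambda_der by (simp add: lambda_der_def)

lemma D_zero: "D i 0 = 0"
  using D_add[of i 0 0] by simp

lemma D_sum: "D i (sum F I) = (\<Sum>a\<in>I. D i (F a))"
  by (induction I rule: infinite_finite_induct) (auto simp: D_zero D_add)

lemma D_scalar: "D i (e c) = 0"
  using D_scal[of i c 1] D_mult[of i 1 1] by simp

lemma der_apply_nth: "d f $ n = (\<Sum>i\<le>n. D i (f $ (n - i)))"
  by (simp add: der_apply_def)

lemma der_apply_add: "d (f + g) = d f + d g"
  by (rule fps_ext) (simp add: der_apply_nth D_add sum.distrib)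

definition der_coeffwise :: "nat \<Rightarrow> 'b fps \<Rightarrow> 'b fps" where
  "der_coeffwise i f = Abs_fps (\<lambda>n. D i (f $ n))"

lemma der_coeffwise_mult:
  "der_coeffwise i (f * g) = der_coeffwise i f * g + f * der_coeffwise i g"
  by (rule fps_ext) (simp add: der_coeffwise_def fps_mult_nth D_sum D_mult sum.distrib)

text \<open>\<open>d\<close> is not a finite sum of derivations of \<open>B[[\<lambda>]]\<close>, so the Leibniz rule is
  transferred from its truncations \<open>der_trunc N\<close>.\<close>

definition der_trunc :: "nat \<Rightarrow> 'b fps \<Rightarrow> 'b fps" where
  "der_trunc N f = (\<Sum>i\<le>N. fps_X ^ i * der_coeffwise i f)"

lemma der_trunc_mult: "der_trunc N (f * g) = der_trunc N f * g + f * der_trunc N g"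
  by (simp add: der_trunc_def der_coeffwise_mult sum_distrib_left sum_distrib_right
      sum.distrib algebra_simps)

lemma der_trunc_nth:
  assumes "n \<le> N"
  shows "der_trunc N f $ n = d f $ n"
proof -
  have "der_trunc N f $ n = (\<Sum>i\<le>N. if n < i then 0 else D i (f $ (n - i)))"
    unfolding der_trunc_def fps_sum_nth fps_X_power_mult_nth der_coeffwise_def fps_nth_Abs_fps
    by simp
  also have "\<dots> = (\<Sum>i\<le>n. if n < i then 0 else D i (f $ (n - i)))"
    using assms by (intro sum.mono_neutral_right) auto
  finally show ?thesis
    by (simp add: der_apply_nth)
qed

lemma der_apply_mult: "d (f * g) = d f * g + f * d g"
proof (rule fps_ext)
  fix n
  have "d (f * g) $ n = der_trunc n (f * g) $ n"
    by (simp add: der_trunc_nth)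
  also have "\<dots> = (der_trunc n f * g) $ n + (f * der_trunc n g) $ n"
    by (simp add: der_trunc_mult)
  also have "\<dots> = (d f * g) $ n + (f * d g) $ n"
    by (intro arg_cong2[where f = "(+)"] fps_mult_nth_cong) (simp_all add: der_trunc_nth)
  finally show "d (f * g) $ n = (d f * g + f * d g) $ n"
    by simp
qed

lemma der_apply_one: "d 1 = 0"
  using der_apply_mult[of 1 1] by simp

lemma der_apply_scalar: "d (fps_map e c) = 0"
  by (rule fps_ext) (simp add: der_apply_nth fps_map_def D_scalar)

lemma der_apply_order:
  assumes "\<forall>m<j. f $ m = 0"
  shows "\<forall>m<Suc j. d f $ m = 0"
proof (intro allI impI)
  fix m assume m: "m < Suc j"
  have "D i (f $ (m - i)) = 0" if "i \<le> m" for i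
    using that m assms by (cases i) (auto simp: D_at_0 D_zero)
  then show "d f $ m = 0"
    by (simp add: der_apply_nth)
qed

lemma der_apply_power_order:
  "\<forall>m<j. f $ m = 0 \<Longrightarrow> \<forall>m<j + k. (d ^^ k) f $ m = 0"
  by (induction k) (simp_all add: der_apply_order)

lemma der_apply_power_nth_below: "m < k \<Longrightarrow> (d ^^ k) f $ m = 0"
  using der_apply_power_order[of 0 f k] by simp

lemma der_apply_power_add: "(d ^^ k) (f + g) = (d ^^ k) f + (d ^^ k) g"
  by (induction k) (simp_all add: der_apply_add)

lemma der_apply_power_mult:
  "(d ^^ k) (f * g) = (\<Sum>j\<le>k. of_nat (k choose j) * (d ^^ j) f * (d ^^ (k - j)) g)"
  by (rule derivation_power_mult[OF der_apply_add der_apply_mult])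

lemma der_apply_power_fixed: "d f = 0 \<Longrightarrow> 0 < k \<Longrightarrow> (d ^^ k) f = 0"
proof (induction k)
  case (Suc k)
  then show ?case
    by (cases k) (auto simp: der_apply_add[of 0 0, simplified])
qed simp

lemma der_exp_nth: "E f $ n = (\<Sum>k\<le>n. exp_coeff k * (d ^^ k) f $ n)"
  by (simp add: der_exp_def)

lemma der_exp_add: "E (f + g) = E f + E g"
  by (rule fps_ext) (simp add: der_exp_nth der_apply_power_add sum.distrib distrib_left)

lemma der_exp_diff: "E (f - g) = E f - E g"
  using der_exp_add[of "f - g" g] by (simp add: eq_diff_eq)

lemma der_exp_lowest:
  assumes "\<forall>m<j. f $ m = 0"
  shows "\<forall>m<j. E f $ m = 0" and "E f $ j = f $ j"
proof -
  note vanish = der_apply_power_order[OF assms]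
  show "\<forall>m<j. E f $ m = 0"
    using vanish by (auto simp: der_exp_nth intro!: sum.neutral)
  have "E f $ j = exp_coeff 0 * f $ j + (\<Sum>k<j. exp_coeff (Suc k) * (d ^^ Suc k) f $ j)"
    by (simp only: der_exp_nth sum.atMost_shift funpow_0)
  also have "(\<Sum>k<j. exp_coeff (Suc k) * (d ^^ Suc k) f $ j) = 0"
  proof (intro sum.neutral ballI)
    fix k
    show "exp_coeff (Suc k) * (d ^^ Suc k) f $ j = 0"
      using vanish[of "Suc k", rule_format, of j] by (simp del: funpow.simps)
  qed
  finally show "E f $ j = f $ j"
    by (simp add: kalg_map_one[OF kalg])
qed

lemma der_exp_inj: "inj E"
proof (rule injI)
  fix f g assume "E f = E g"
  then have "E (f - g) = 0"
    by (simp add: der_exp_diff)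
  moreover have "E (f - g) $ subdegree (f - g) = (f - g) $ subdegree (f - g)"
    by (rule der_exp_lowest(2)) (blast dest: nth_less_subdegree_zero)
  ultimately show "f = g"
    using nth_subdegree_nonzero[of "f - g"] by force
qed

lemma der_exp_fixed:
  assumes "d f = 0"
  shows "E f = f"
proof (rule fps_ext)
  fix n
  have "E f $ n = exp_coeff 0 * f $ n + (\<Sum>k<n. exp_coeff (Suc k) * (d ^^ Suc k) f $ n)"
    by (simp only: der_exp_nth sum.atMost_shift funpow_0)
  then show "E f $ n = f $ n"
    using der_apply_power_fixed[OF assms] by (simp add: kalg_map_one[OF kalg] del: funpow.simps)
qed

lemma der_exp_one: "E 1 = 1"
  by (rule der_exp_fixed[OF der_apply_one])

lemma der_exp_scalar: "E (fps_map e c) = fps_map e c"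
  by (rule der_exp_fixed[OF der_apply_scalar])

lemma exp_coeff_binomial:
  assumes "j \<le> k"
  shows "exp_coeff k * of_nat (k choose j) = exp_coeff j * exp_coeff (k - j)"
proof -
  have "inverse (fact k) * (of_nat (k choose j) :: 'k) = inverse (fact j) * inverse (fact (k - j))"
    using assms by (simp add: binomial_fact field_simps)
  then show ?thesis
    using kalg_map_mult[OF kalg] kalg_map_of_nat[OF kalg] by metis
qed

lemma der_exp_nth_truncated:
  assumes "n \<le> N"
  shows "E f $ n = (\<Sum>k\<le>N. fps_const (exp_coeff k) * (d ^^ k) f) $ n"
proof -
  have "(\<Sum>k\<le>N. fps_const (exp_coeff k) * (d ^^ k) f) $ n = (\<Sum>k\<le>N. exp_coeff k * (d ^^ k) f $ n)"
    by (simp add: fps_sum_nth)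
  also have "\<dots> = (\<Sum>k\<le>n. exp_coeff k * (d ^^ k) f $ n)"
    using assms by (intro sum.mono_neutral_right) (auto simp: der_apply_power_nth_below)
  finally show ?thesis
    by (simp add: der_exp_nth)
qed

lemma der_exp_mult: "E (f * g) = E f * E g"
proof (rule fps_ext)
  fix n
  let ?A = "\<lambda>j. (d ^^ j) f" and ?B = "\<lambda>j. (d ^^ j) g" and ?c = exp_coeff
  have "(E f * E g) $ n
      = ((\<Sum>j\<le>n. fps_const (?c j) * ?A j) * (\<Sum>l\<le>n. fps_const (?c l) * ?B l)) $ n"
    by (intro fps_mult_nth_cong) (simp_all add: der_exp_nth_truncated)
  also have "\<dots> = (\<Sum>j\<le>n. \<Sum>l\<le>n. ?c j * ?c l * (?A j * ?B l) $ n)"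
    unfolding sum_product fps_sum_nth
    by (intro sum.cong refl) (simp add: mult_ac fps_const_mult[symmetric] del: fps_const_mult)
  also have "\<dots> = (\<Sum>k\<le>n. \<Sum>j\<le>k. ?c j * ?c (k - j) * (?A j * ?B (k - j)) $ n)"
  proof (intro sum_square_eq_triangle)
    fix j l assume "n < j + l"
    then have "(?A j * ?B l) $ n = 0"
      by (intro fps_mult_nth_eq_0_below[of j _ l]) (simp_all add: der_apply_power_nth_below)
    then show "?c j * ?c l * (?A j * ?B l) $ n = 0"
      by simp
  qed
  also have "\<dots> = (\<Sum>k\<le>n. \<Sum>j\<le>k. ?c k * of_nat (k choose j) * (?A j * ?B (k - j)) $ n)"
    by (intro sum.cong refl) (simp add: exp_coeff_binomial)
  also have "\<dots> = E (f * g) $ n"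
    by (simp add: der_exp_nth der_apply_power_mult fps_sum_nth sum_distrib_left fps_of_nat
        mult.assoc)
  finally show "E (f * g) $ n = (E f * E g) $ n"
    by simp
qed

lemma der_exp_alg_hom: "alg_hom (fps_map e) (fps_map e) E"
  by (simp add: alg_hom_def der_exp_one der_exp_add der_exp_mult der_exp_scalar)

lemma der_exp_correction:
  assumes "\<forall>m<n. r $ m = 0"
  shows "\<forall>m<Suc n. (r - E (fps_X ^ n * fps_const (r $ n))) $ m = 0"
proof -
  have "\<forall>m<n. (fps_X ^ n * fps_const (r $ n)) $ m = 0"
    by (simp add: fps_X_power_mult_nth)
  from der_exp_lowest[OF this] show ?thesis
    using assms by (auto simp: less_Suc_eq fps_X_power_mult_nth)
qed

text \<open>The preimage of \<open>y\<close> is the limit of the polynomials \<open>t n\<close>, each obtained from the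
  previous one by cancelling the lowest coefficient of the error \<open>y - E (t n)\<close>.\<close>

lemma der_exp_image:
  assumes P_0: "0 \<in> P" and P_add: "\<And>x y. x \<in> P \<Longrightarrow> y \<in> P \<Longrightarrow> x + y \<in> P"
    and into: "\<And>f. f \<in> fps_over P \<Longrightarrow> E f \<in> C"
    and C_diff: "\<And>x y. x \<in> C \<Longrightarrow> y \<in> C \<Longrightarrow> x - y \<in> C"
    and C_lowest: "\<And>h n. h \<in> C \<Longrightarrow> \<forall>m<n. h $ m = 0 \<Longrightarrow> h $ n \<in> P"
  shows "E ` fps_over P = C"
proof
  show "E ` fps_over P \<subseteq> C"
    using into by blast
  show "C \<subseteq> E ` fps_over P"
  proof
    fix y assume y: "y \<in> C"
    define t where "t = rec_nat 0 (\<lambda>n tn. tn + fps_X ^ n * fps_const ((y - E tn) $ n))"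
    have t_0: "t 0 = 0" and t_Suc: "t (Suc n) = t n + fps_X ^ n * fps_const ((y - E (t n)) $ n)"
      for n
      by (simp_all add: t_def)
    have t_invariant: "t n \<in> fps_over P \<and> (\<forall>m<n. (y - E (t n)) $ m = 0)" for n
    proof (induction n)
      case 0
      then show ?case
        using P_0 by (simp add: t_0 fps_over_def)
    next
      case (Suc n)
      let ?r = "y - E (t n)"
      have "?r \<in> C"
        by (rule C_diff[OF y into[OF conjunct1[OF Suc.IH]]])
      then have "?r $ n \<in> P"
        by (rule C_lowest[OF _ conjunct2[OF Suc.IH]])
      then have X_mem: "fps_X ^ n * fps_const (?r $ n) \<in> fps_over P"
        using P_0 by (simp add: fps_over_def fps_X_power_mult_nth)
      have "t (Suc n) \<in> fps_over P"
        unfolding t_Suc using fps_over_add[OF P_add conjunct1[OF Suc.IH] X_mem] .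
      moreover have "\<forall>m<Suc n. (y - E (t (Suc n))) $ m = 0"
        unfolding t_Suc der_exp_add diff_diff_eq[symmetric]
        by (rule der_exp_correction[OF conjunct2[OF Suc.IH]])
      ultimately show ?case ..
    qed
    have t_stable: "t k $ m = t (Suc m) $ m" if "m < k" for m k
      using that
    proof (induction k)
      case (Suc k)
      then show ?case
        by (auto simp: t_Suc fps_X_power_mult_nth less_Suc_eq)
    qed simp
    define b where "b = Abs_fps (\<lambda>m. t (Suc m) $ m)"
    have "b \<in> fps_over P"
      using t_invariant by (simp add: b_def fps_over_def)
    moreover have "E b = y"
    proof (rule fps_ext)
      fix n
      have "\<forall>m<Suc n. (b - t (Suc n)) $ m = 0"
      proof (intro allI impI)
        fix m assume "m < Suc n"
        then show "(b - t (Suc n)) $ m = 0"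
          using t_stable[of m "Suc n"] by (simp add: b_def)
      qed
      then have "E (b - t (Suc n)) $ n = 0"
        using der_exp_lowest(1) by blast
      then have "E b $ n = E (t (Suc n)) $ n"
        by (simp add: der_exp_diff)
      also have "\<dots> = y $ n"
        using t_invariant[of "Suc n"] by simp
      finally show "E b $ n = y $ n" .
    qed
    ultimately show "y \<in> E ` fps_over P"
      by blast
  qed
qed

end

theorem proposition3p9:
  fixes eA :: "'k::field_char_0 \<Rightarrow> 'a::comm_ring_1"
    and eB :: "'k \<Rightarrow> 'b::comm_ring_1"
    and pi0 :: "'a \<Rightarrow> 'a \<Rightarrow> 'a" and sigma0 :: "'b \<Rightarrow> 'b \<Rightarrow> 'b"
    and phi0 :: "'a \<Rightarrow> 'b"
    and pi :: "'a fps \<Rightarrow> 'a fps \<Rightarrow> 'a fps" and sigma :: "'b fps \<Rightarrow> 'b fps \<Rightarrow> 'b fps"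
    and Phi :: "'a fps \<Rightarrow> 'b fps"
    and D :: "nat \<Rightarrow> 'b \<Rightarrow> 'b"
  assumes algA: "kalg_map eA" and algB: "kalg_map eB"
    and pA: "poisson eA pi0" and pB: "poisson eB sigma0"
    and phi0_hom: "poisson_hom eA eB pi0 sigma0 phi0"
    and pi_def: "fpoisson eA pi" and sigma_def: "fpoisson eB sigma"
    and pi_0: "\<And>x y. fps_nth (pi (fps_const x) (fps_const y)) 0 = pi0 x y"
    and sigma_0: "\<And>x y. fps_nth (sigma (fps_const x) (fps_const y)) 0 = sigma0 x y"
    and Phi_hom: "poisson_hom (fps_map eA) (fps_map eB) pi sigma Phi"
    and Phi_0: "\<And>x. fps_nth (Phi (fps_const x)) 0 = phi0 x"
    and X': "lambda_der eB D"
    and incl: "\<forall>f \<in> fps_over (poisson_commutant sigma0 phi0).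
                 der_exp eB D f \<in> {b. \<forall>a. sigma b (Phi a) = 0}"
  shows "(bij_betw (der_exp eB D) (fps_over (poisson_commutant sigma0 phi0))
            {b. \<forall>a. sigma b (Phi a) = 0}
         \<and> der_exp eB D 1 = 1
         \<and> (\<forall>f \<in> fps_over (poisson_commutant sigma0 phi0). \<forall>g \<in> fps_over (poisson_commutant sigma0 phi0).
              der_exp eB D (f + g) = der_exp eB D f + der_exp eB D g
            \<and> der_exp eB D (f * g) = der_exp eB D f * der_exp eB D g))
       \<and> (\<exists>pi'. poisson_on (fps_over (poisson_commutant sigma0 phi0)) (fps_map eB) pi'
              \<and> (\<forall>f \<in> fps_over (poisson_commutant sigma0 phi0). \<forall>g \<in> fps_over (poisson_commutant sigma0 phi0).
                   der_exp eB D (pi' f g) = sigma (der_exp eB D f) (der_exp eB D g))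
              \<and> (\<forall>pi''. (poisson_on (fps_over (poisson_commutant sigma0 phi0)) (fps_map eB) pi''
                   \<and> (\<forall>f \<in> fps_over (poisson_commutant sigma0 phi0). \<forall>g \<in> fps_over (poisson_commutant sigma0 phi0).
                        der_exp eB D (pi'' f g) = sigma (der_exp eB D f) (der_exp eB D g)))
                 \<longrightarrow> (\<forall>f \<in> fps_over (poisson_commutant sigma0 phi0). \<forall>g \<in> fps_over (poisson_commutant sigma0 phi0).
                        pi'' f g = pi' f g)))"
proof -
  interpret lambda_derivation eB D
    using algB X' by unfold_locales
  let ?A' = "poisson_commutant sigma0 phi0" and ?C = "poisson_commutant sigma Phi"
  have C_eq: "{b. \<forall>a. sigma b (Phi a) = 0} = ?C"
    by (simp add: poisson_commutant_def)
  have image: "E ` fps_over ?A' = ?C"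
    using incl poisson_commutant_diff[OF sigma_def]
      poisson_commutant_lowest_coeff[of eB sigma sigma0 Phi phi0, OF algB sigma_def sigma_0 Phi_0]
    by (intro der_exp_image poisson_commutant_zero[OF pB] poisson_commutant_add[OF pB])
      (auto simp: C_eq)
  have bij: "bij_betw E (fps_over ?A') ?C"
    using image inj_on_subset[OF der_exp_inj subset_UNIV] by (simp add: bij_betw_def)
  show ?thesis
    unfolding C_eq
  proof (intro conjI ballI bij der_exp_one der_exp_add der_exp_mult
      alg_hom_poisson_pullback[OF sigma_def der_exp_alg_hom der_exp_inj])
    fix f g c assume f: "f \<in> fps_over ?A'" and g: "g \<in> fps_over ?A'"
    show "f + g \<in> fps_over ?A'" "f * g \<in> fps_over ?A'" "fps_map eB c * f \<in> fps_over ?A'"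
      by (fact fps_over_poisson_commutant[OF pB f g])+
    have "sigma (E f) (E g) \<in> ?C"
      using f g image poisson_commutant_bracket[OF sigma_def] by blast
    then show "sigma (E f) (E g) \<in> E ` fps_over ?A'"
      by (simp only: image)
  qed
qed

end
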